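(* For a ring $R$, the following are equivalent: (1) $R$ is a DT ring; (2) $R$ is a semi-tripotent ring.
   Context: All rings are associative with identity. $J(R)$ is the Jacobson radical, $U(R)$ the group of units. $\Delta(R)=\{x\in R: x+u\in U(R)\text{ for all }u\in U(R)\}$. $\mathrm{Tr}(R)=\{x\in R: x^3=x\}$. A ring $R$ is a DT ring if every $r\in R$ can be written $r=e+d$ with $e\in\mathrm{Tr}(R)$ and $d\in\Delta(R)$. A ring $R$ is semi-tripotent if every $r\in R$ can be written $r=e+j$ with $e\in\mathrm{Tr}(R)$ and $j\in J(R)$. *)

theory Defs
  imports Main
begin

definition unit_of :: "'a::ring_1 \<Rightarrow> bool" where
  "unit_of u \<longleftrightarrow> (\<exists>v. u * v = 1 \<and> v * u = 1)"

definition Units :: "'a::ring_1 set" where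
  "Units = {u. unit_of u}"

definition left_ideal :: "'a::ring_1 set \<Rightarrow> bool" where
  "left_ideal I \<longleftrightarrow> 0 \<in> I \<and> (\<forall>x\<in>I. \<forall>y\<in>I. x - y \<in> I) \<and> (\<forall>r. \<forall>x\<in>I. r * x \<in> I)"

definition maximal_left_ideal :: "'a::ring_1 set \<Rightarrow> bool" where
  "maximal_left_ideal M \<longleftrightarrow> left_ideal M \<and> M \<noteq> UNIV \<and>
     (\<forall>I. left_ideal I \<and> M \<subseteq> I \<longrightarrow> I = M \<or> I = UNIV)"

definition Jac :: "'a::ring_1 set" where
  "Jac = \<Inter> {M. maximal_left_ideal M}"

definition Delta :: "'a::ring_1 set" where
  "Delta = {x. \<forall>u\<in>Units. x + u \<in> Units}"

definition Tr :: "'a::ring_1 set" where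
  "Tr = {x. x ^ 3 = x}"

definition DT_ring :: "'a::ring_1 itself \<Rightarrow> bool" where
  "DT_ring _ \<longleftrightarrow> (\<forall>r::'a. \<exists>e\<in>Tr. \<exists>d\<in>Delta. r = e + d)"

definition semi_tripotent :: "'a::ring_1 itself \<Rightarrow> bool" where
  "semi_tripotent _ \<longleftrightarrow> (\<forall>r::'a. \<exists>e\<in>Tr. \<exists>j\<in>Jac. r = e + j)"

end

theory Submission
  imports Defs
begin

text \<open>Every Jacobson element lies in \<open>\<Delta>(R)\<close>, so semi-tripotent rings are DT rings.
  Conversely, in a DT ring let \<open>d \<in> \<Delta>(R)\<close> and write any \<open>r\<close> as \<open>e + d'\<close> with \<open>e\<^sup>3 = e\<close>,
  \<open>d' \<in> \<Delta>(R)\<close>. Since \<open>\<Delta>(R)\<close> is closed under products, \<open>1 + r d = (1 + e d) + d' d\<close> is a unit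
  as soon as \<open>1 + e d\<close> is; then \<open>d \<in> J(R)\<close>. For tripotent \<open>e\<close>, with \<open>f = e\<^sup>2\<close> idempotent and
  \<open>w = 1 - f + e\<close> an involution, \<open>e d = f (w d)\<close>, which reduces the claim to idempotents \<open>f\<close>.
  There one modifies \<open>d\<close> by square-zero off-diagonal corrections to a unit commuting with \<open>f\<close>,
  whose \<open>f\<close>-corner shows that \<open>1 + f d f\<close> is a unit, and \<open>1 + f d = (1 + f d (1 - f)) (1 + f d f)\<close>.\<close>

lemma unit_ofI: "u * v = 1 \<Longrightarrow> v * u = 1 \<Longrightarrow> unit_of (u::'a::ring_1)"
  unfolding unit_of_def by blast

lemma unit_of_mult:
  assumes "unit_of (u::'a::ring_1)" "unit_of v"
  shows "unit_of (u * v)"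
proof -
  obtain u' v' where "u * u' = 1" "u' * u = 1" "v * v' = 1" "v' * v = 1"
    using assms unfolding unit_of_def by blast
  then show ?thesis
    by (intro unit_ofI[of _ "v' * u'"]) (metis mult.assoc mult_1_right)+
qed

lemma unit_of_one: "unit_of (1::'a::ring_1)"
  by (rule unit_ofI[of _ 1]) simp_all

lemma unit_of_minus: "unit_of (u::'a::ring_1) \<Longrightarrow> unit_of (- u)"
  unfolding unit_of_def by (metis minus_mult_minus)

lemma unit_of_one_plus_square_zero: "b * b = 0 \<Longrightarrow> unit_of (1 + b::'a::ring_1)"
  by (rule unit_ofI[of _ "1 - b"]) (simp_all add: algebra_simps)

lemma unit_of_corner:
  fixes f w :: "'a::ring_1"
  assumes f: "f * f = f" and w: "unit_of w" and comm: "f * w = w * f"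
  shows "unit_of (1 - f + f * w)"
proof -
  have ff: "f * (f * y) = f * y" for y using f by (metis mult.assoc)
  obtain v where v: "w * v = 1" "v * w = 1" using w unfolding unit_of_def by blast
  have comm': "f * v = v * f"
    by (metis comm mult.assoc mult_1_left mult_1_right v)
  have "f * w * (1 - f) = 0" "f * v * (1 - f) = 0"
    using comm comm' f by (simp_all add: algebra_simps)
  moreover have "f * w * (f * v) = f" "f * v * (f * w) = f"
    by (metis comm comm' f mult.assoc v mult_1_right)+
  ultimately show ?thesis
    by (intro unit_ofI[of _ "1 - f + f * v"]) (simp_all add: algebra_simps f ff)
qed

lemma left_ideal_eq_UNIV_if_one: "left_ideal I \<Longrightarrow> 1 \<in> I \<Longrightarrow> I = (UNIV::'a::ring_1 set)"
  unfolding left_ideal_def by (metis UNIV_eq_I mult_1_right)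

lemma maximal_left_ideal_one_notin: "maximal_left_ideal M \<Longrightarrow> (1::'a::ring_1) \<notin> M"
  unfolding maximal_left_ideal_def using left_ideal_eq_UNIV_if_one by blast

lemma left_ideal_zero: "left_ideal {0::'a::ring_1}"
  unfolding left_ideal_def by simp

lemma left_ideal_add_left_multiples:
  fixes a :: "'a::ring_1"
  assumes M: "left_ideal M"
  shows "left_ideal {m + r * a |m r. m \<in> M}"
  unfolding left_ideal_def
proof (intro conjI ballI allI)
  have "0 = 0 + 0 * a" and "0 \<in> M" using M unfolding left_ideal_def by simp_all
  then show "0 \<in> {m + r * a |m r. m \<in> M}" by blast
next
  fix x y assume "x \<in> {m + r * a |m r. m \<in> M}" "y \<in> {m + r * a |m r. m \<in> M}"
  then obtain m r m' r' where "x = m + r * a" "y = m' + r' * a" "m \<in> M" "m' \<in> M"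
    by blast
  moreover from this have "m - m' \<in> M" using M unfolding left_ideal_def by blast
  moreover have "x - y = (m - m') + (r - r') * a" using \<open>x = m + r * a\<close> \<open>y = m' + r' * a\<close>
    by (simp add: algebra_simps)
  ultimately show "x - y \<in> {m + r * a |m r. m \<in> M}" by blast
next
  fix t x assume "x \<in> {m + r * a |m r. m \<in> M}"
  then obtain m r where "x = m + r * a" "m \<in> M" by blast
  moreover from this have "t * m \<in> M" using M unfolding left_ideal_def by blast
  moreover have "t * x = t * m + (t * r) * a" using \<open>x = m + r * a\<close>
    by (simp add: algebra_simps)
  ultimately show "t * x \<in> {m + r * a |m r. m \<in> M}" by blast
qed

lemma left_ideal_Union_chain:
  assumes "C \<noteq> {}" "\<And>I. I \<in> C \<Longrightarrow> left_ideal (I::'a::ring_1 set)"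
    and chain: "\<And>I J. I \<in> C \<Longrightarrow> J \<in> C \<Longrightarrow> I \<subseteq> J \<or> J \<subseteq> I"
  shows "left_ideal (\<Union>C)"
  unfolding left_ideal_def
proof (intro conjI ballI allI)
  show "0 \<in> \<Union>C" using assms(1,2) unfolding left_ideal_def by blast
next
  fix x y assume "x \<in> \<Union>C" "y \<in> \<Union>C"
  then obtain I J where IJ: "I \<in> C" "J \<in> C" "x \<in> I" "y \<in> J" by blast
  then obtain K where "K \<in> C" "x \<in> K" "y \<in> K" using chain[OF IJ(1,2)] by blast
  then show "x - y \<in> \<Union>C" using assms(2) unfolding left_ideal_def by blast
next
  fix r x assume "x \<in> \<Union>C"
  then show "r * x \<in> \<Union>C" using assms(2) unfolding left_ideal_def by blast
qed

lemma maximal_left_ideal_exists: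
  fixes L :: "'a::ring_1 set"
  assumes "left_ideal L" "1 \<notin> L"
  obtains M where "maximal_left_ideal M" "L \<subseteq> M"
proof -
  let ?A = "{I. left_ideal I \<and> L \<subseteq> I \<and> 1 \<notin> I}"
  have "\<exists>M\<in>?A. \<forall>X\<in>?A. M \<subseteq> X \<longrightarrow> X = M"
  proof (rule subset_Zorn_nonempty)
    fix C assume C: "C \<noteq> {}" "subset.chain ?A C"
    then have sub: "C \<subseteq> ?A" and "\<And>I J. I \<in> C \<Longrightarrow> J \<in> C \<Longrightarrow> I \<subseteq> J \<or> J \<subseteq> I"
      unfolding subset.chain_def by auto
    then have "left_ideal (\<Union>C)" using C(1) by (intro left_ideal_Union_chain) auto
    moreover have "L \<subseteq> \<Union>C" "1 \<notin> \<Union>C" using C(1) sub by auto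
    ultimately show "\<Union>C \<in> ?A" by simp
  next
    show "?A \<noteq> {}" using assms by blast
  qed
  then obtain M where M: "M \<in> ?A" "\<forall>X\<in>?A. M \<subseteq> X \<longrightarrow> X = M" by blast
  have "maximal_left_ideal M"
    unfolding maximal_left_ideal_def
  proof (intro conjI allI impI)
    show "left_ideal M" "M \<noteq> UNIV" using M(1) by auto
    fix I assume I: "left_ideal I \<and> M \<subseteq> I"
    show "I = M \<or> I = UNIV"
    proof (cases "1 \<in> I")
      case True
      then show ?thesis using I left_ideal_eq_UNIV_if_one by blast
    next
      case False
      then show ?thesis using I M by blast
    qed
  qed
  then show thesis using that M(1) by blast
qed

lemma left_ideal_Jac: "left_ideal (Jac::'a::ring_1 set)"
  unfolding left_ideal_def Jac_def maximal_left_ideal_def by auto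

lemma Jac_left_invertible:
  fixes y :: "'a::ring_1"
  assumes y: "y \<in> Jac"
  shows "\<exists>z. z * (1 + y) = 1"
proof (rule ccontr)
  let ?L = "{m + r * (1 + y) |m r. m \<in> {0}}"
  assume "\<nexists>z. z * (1 + y) = 1"
  then have "1 \<notin> ?L" by force
  then obtain M where M: "maximal_left_ideal M" "?L \<subseteq> M"
    by (rule maximal_left_ideal_exists[OF left_ideal_add_left_multiples[OF left_ideal_zero]])
  have "0 + 1 * (1 + y) \<in> ?L" by blast
  then have "1 + y \<in> M" using M(2) by auto
  moreover have "y \<in> M" using y M(1) unfolding Jac_def by blast
  ultimately have "(1 + y) - y \<in> M"
    using M(1) unfolding maximal_left_ideal_def left_ideal_def by blast
  then show False using maximal_left_ideal_one_notin[OF M(1)] by simp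
qed

text \<open>A left inverse \<open>z\<close> of \<open>1 + y\<close> has the form \<open>1 - z y\<close>, so it is itself left invertible
  and hence a unit.\<close>
lemma unit_of_one_plus_Jac:
  fixes y :: "'a::ring_1"
  assumes y: "y \<in> Jac"
  shows "unit_of (1 + y)"
proof -
  obtain z where z: "z * (1 + y) = 1" using Jac_left_invertible y by blast
  have "z * y \<in> Jac" using left_ideal_Jac y unfolding left_ideal_def by blast
  then have "- (z * y) \<in> Jac"
    using left_ideal_Jac unfolding left_ideal_def by (metis diff_0)
  then obtain w where w: "w * (1 + - (z * y)) = 1" using Jac_left_invertible by blast
  have "z = 1 + - (z * y)" using z by (simp add: algebra_simps)
  then have wz: "w * z = 1" using w by simp
  have "1 + y = w * (z * (1 + y))" using wz by (simp add: mult.assoc[symmetric])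
  also have "\<dots> = w" using z by simp
  finally show ?thesis using z wz by (intro unit_ofI[of _ z]) simp_all
qed

lemma mem_Jac_if_left_invertible:
  fixes d :: "'a::ring_1"
  assumes inv: "\<And>r. \<exists>v. v * (1 + r * d) = 1"
  shows "d \<in> Jac"
  unfolding Jac_def
proof (rule InterI, rule ccontr)
  fix M assume "M \<in> {M. maximal_left_ideal M}" and d: "d \<notin> M"
  then have M: "maximal_left_ideal M" by simp
  then have LM: "left_ideal M" unfolding maximal_left_ideal_def by blast
  let ?I = "{m + r * d |m r. m \<in> M}"
  have "m \<in> ?I" if "m \<in> M" for m
    using that by (metis (mono_tags, lifting) add_0_right mem_Collect_eq mult_zero_left)
  moreover have "0 + 1 * d \<in> ?I" using LM unfolding left_ideal_def by blast
  ultimately have "M \<subseteq> ?I" "d \<in> ?I" by auto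
  then have "?I = UNIV"
    using M d left_ideal_add_left_multiples[OF LM] unfolding maximal_left_ideal_def by blast
  then obtain m r where mr: "1 = m + r * d" "m \<in> M" by blast
  have "m = 1 + (- r) * d" using mr(1) by (simp add: algebra_simps)
  then obtain v where "v * m = 1" using inv by metis
  moreover have "v * m \<in> M" using LM mr(2) unfolding left_ideal_def by blast
  ultimately show False using maximal_left_ideal_one_notin[OF M] by simp
qed

lemma Jac_subset_Delta: "(Jac::'a::ring_1 set) \<subseteq> Delta"
proof
  fix j :: 'a assume j: "j \<in> Jac"
  show "j \<in> Delta" unfolding Delta_def Units_def
  proof (intro CollectI ballI)
    fix u :: 'a assume "u \<in> Collect unit_of"
    then obtain v where v: "u * v = 1" "v * u = 1" unfolding unit_of_def by blast
    have "v * j \<in> Jac" using left_ideal_Jac j unfolding left_ideal_def by blast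
    then have "unit_of (u * (1 + v * j))"
      using unit_of_mult unit_of_one_plus_Jac v unit_ofI by blast
    moreover have "u * (1 + v * j) = j + u" using v by (simp add: algebra_simps mult.assoc[symmetric])
    ultimately show "unit_of (j + u)" by simp
  qed
qed

lemma Delta_add_unit: "d \<in> Delta \<Longrightarrow> unit_of u \<Longrightarrow> unit_of (d + (u::'a::ring_1))"
  unfolding Delta_def Units_def by auto

lemma Delta_add: "x \<in> Delta \<Longrightarrow> y \<in> Delta \<Longrightarrow> x + (y::'a::ring_1) \<in> Delta"
  unfolding Delta_def Units_def by (auto simp: add.assoc)

lemma unit_diff_Delta:
  assumes "unit_of u" "d \<in> Delta"
  shows "unit_of (u - (d::'a::ring_1))"
proof -
  have "unit_of (d + - u)" using assms Delta_add_unit unit_of_minus by blast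
  then have "unit_of (- (d + - u))" by (rule unit_of_minus)
  then show ?thesis by simp
qed

lemma unit_mult_Delta:
  assumes x: "x \<in> Delta" and u: "unit_of u"
  shows "u * (x::'a::ring_1) \<in> Delta"
  unfolding Delta_def Units_def
proof (intro CollectI ballI)
  fix w :: 'a assume w: "w \<in> Collect unit_of"
  obtain v where v: "u * v = 1" "v * u = 1" using u unfolding unit_of_def by blast
  have "unit_of (u * (x + v * w))"
    using w x u v by (simp add: Delta_add_unit unit_of_mult unit_ofI)
  moreover have "u * (x + v * w) = u * x + w" using v by (simp add: algebra_simps mult.assoc[symmetric])
  ultimately show "unit_of (u * x + w)" by simp
qed

lemma Delta_mult:
  assumes x: "x \<in> Delta" and y: "y \<in> Delta"
  shows "x * (y::'a::ring_1) \<in> Delta"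
  unfolding Delta_def Units_def
proof (intro CollectI ballI)
  fix u :: 'a assume "u \<in> Collect unit_of"
  then have u: "unit_of u" by simp
  have "unit_of ((x + u) * (1 + y))"
    using x y u by (simp add: Delta_add_unit unit_of_mult unit_of_one add.commute[of 1])
  moreover have "x + u * y \<in> Delta" using x y u by (simp add: Delta_add unit_mult_Delta)
  ultimately have "unit_of ((x + u) * (1 + y) - (x + u * y))" by (rule unit_diff_Delta)
  then show "unit_of (x * y + u)" by (simp add: algebra_simps)
qed

lemma unit_of_one_plus_idempotent_Delta:
  fixes f x :: "'a::ring_1"
  assumes f: "f * f = f" and x: "x \<in> Delta"
  shows "unit_of (1 + f * x)"
proof -
  have ff: "f * (f * y) = f * y" for y using f by (metis mult.assoc)
  define b where "b = f * x * (1 - f)"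
  define c where "c = (1 - f) * x * f"
  have units: "unit_of (1 + - b)" "unit_of (1 + - c)"
    unfolding b_def c_def by (intro unit_of_one_plus_square_zero; simp add: algebra_simps f ff)+
  txt \<open>The factor \<open>(1 - c) (1 - b)\<close> cancels the off-diagonal blocks \<open>b\<close>, \<open>c\<close> of \<open>x\<close>
    with respect to \<open>f\<close>, so \<open>w\<close> commutes with \<open>f\<close>.\<close>
  define w where "w = x + (1 - c) * (1 - b)"
  have uw: "unit_of w"
    unfolding w_def using x units by (simp add: Delta_add_unit unit_of_mult)
  have fw: "f * w = f + f * x * f" and wf: "w * f = f + f * x * f"
    unfolding w_def b_def c_def by (simp_all add: algebra_simps f ff)
  have "unit_of (1 - f + f * w)" using unit_of_corner[OF f uw] fw wf by simp
  moreover have "1 - f + f * w = 1 + f * x * f" using fw by (simp add: algebra_simps)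
  ultimately have "unit_of (1 + f * x * f)" by simp
  moreover have "unit_of (1 + b)"
    unfolding b_def by (rule unit_of_one_plus_square_zero) (simp add: algebra_simps f ff)
  moreover have "1 + f * x = (1 + b) * (1 + f * x * f)"
    unfolding b_def by (simp add: algebra_simps f ff)
  ultimately show ?thesis by (simp add: unit_of_mult)
qed

lemma unit_of_one_plus_tripotent_Delta:
  fixes e x :: "'a::ring_1"
  assumes e: "e ^ 3 = e" and x: "x \<in> Delta"
  shows "unit_of (1 + e * x)"
proof -
  define f where "f = e * e"
  have ef: "e * f = e" and fe: "f * e = e"
    using e unfolding f_def by (simp_all add: power3_eq_cube mult.assoc)
  then have ff: "f * f = f" unfolding f_def by (simp add: mult.assoc)
  define w where "w = 1 - f + e"
  have "w * w = 1" unfolding w_def using ef fe ff by (simp add: algebra_simps) (simp add: f_def)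
  then have "w * x \<in> Delta" using x unit_mult_Delta unit_ofI by blast
  then have "unit_of (1 + f * (w * x))" using unit_of_one_plus_idempotent_Delta ff by blast
  moreover have "f * w = e" unfolding w_def using fe ff by (simp add: algebra_simps)
  ultimately show ?thesis by (simp add: mult.assoc[symmetric])
qed

lemma DT_ring_Delta_subset_Jac:
  assumes DT: "DT_ring TYPE('a::ring_1)"
  shows "(Delta::'a set) \<subseteq> Jac"
proof
  fix d :: 'a assume d: "d \<in> Delta"
  have "unit_of (1 + r * d)" for r
  proof -
    obtain e d' where ed: "e \<in> Tr" "d' \<in> Delta" "r = e + d'"
      using DT unfolding DT_ring_def by blast
    have "unit_of (1 + e * d)"
      using ed(1) d by (simp add: Tr_def unit_of_one_plus_tripotent_Delta)
    moreover have "d' * d \<in> Delta" using ed(2) d by (rule Delta_mult)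
    ultimately have "unit_of (d' * d + (1 + e * d))" by (simp add: Delta_add_unit)
    then show ?thesis using ed(3) by (simp add: algebra_simps)
  qed
  then have "\<exists>v. v * (1 + r * d) = 1" for r unfolding unit_of_def by blast
  then show "d \<in> Jac" by (rule mem_Jac_if_left_invertible)
qed

theorem corollary4p9:
  shows "DT_ring TYPE('a::ring_1) \<longleftrightarrow> semi_tripotent TYPE('a::ring_1)"
proof
  assume DT: "DT_ring TYPE('a)"
  then show "semi_tripotent TYPE('a)"
    using DT_ring_Delta_subset_Jac[OF DT] unfolding DT_ring_def semi_tripotent_def by blast
next
  assume "semi_tripotent TYPE('a)"
  then show "DT_ring TYPE('a)"
    using Jac_subset_Delta unfolding semi_tripotent_def DT_ring_def by blast
qed

end
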